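(* Let $\mathbb K$ be a field, $d\ge1$, and let $(a_n)_{n\ge0}$ be a sequence in $\mathbb K$ satisfying $a_n=\sum_{i=1}^d\gamma_ia_{n-i}$ for all $n\ge d$, where $\gamma_1,\dots,\gamma_d\in\mathbb K$, $\gamma_d\ne0$, and $(a_0,\dots,a_{d-1})\ne0$. Then there exists a graded $\mathbb K$-algebra $A$ with $d+3$ generators of degree $1$ and $d^2+4d+5$ homogeneous quadratic relations such that for all $n\ge0$ $$h_A(n+3)=\begin{cases}2d+5,& a_n=0,\\ 2d+4,& a_n\ne0.\end{cases}$$
   Context: $h_A(n)=\dim A_n$ for a graded algebra $A=\bigoplus_{n\ge0}A_n$ with $A_0=\mathbb K$. *)

theory Defs
  imports Complex_Main "HOL-Library.Function_Algebras"
begin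

text \<open>Free associative (noncommutative) algebra on generators x_0,...,x_(g-1) over a field 'k.
  Its degree-n component is identified with the 'k-valued functions on words of length n
  over the alphabet {0..<g} (the coefficient of each monomial).\<close>

definition words :: "nat \<Rightarrow> nat \<Rightarrow> nat list set" where
  "words g n = {w. length w = n \<and> set w \<subseteq> {0..<g}}"

definition fscale :: "'k::field \<Rightarrow> (nat list \<Rightarrow> 'k) \<Rightarrow> (nat list \<Rightarrow> 'k)" where
  "fscale c f = (\<lambda>w. c * f w)"

text \<open>A homogeneous quadratic relation r = sum_{i,j<g} r i j x_i x_j is given by its
  coefficient function. The element u * r * v of the free algebra (u, v words):\<close>
definition sandwich :: "nat \<Rightarrow> nat list \<Rightarrow> (nat \<Rightarrow> nat \<Rightarrow> 'k::field) \<Rightarrow> nat list \<Rightarrow> (nat list \<Rightarrow> 'k)" where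
  "sandwich g u r v = (\<lambda>w. \<Sum>i<g. \<Sum>j<g. if w = u @ [i, j] @ v then r i j else 0)"

definition ideal_deg :: "nat \<Rightarrow> (nat \<Rightarrow> nat \<Rightarrow> 'k::field) list \<Rightarrow> nat \<Rightarrow> (nat list \<Rightarrow> 'k) set" where
  "ideal_deg g rels n = module.span fscale
     {sandwich g u r v | u r v. r \<in> set rels \<and> u \<in> words g (length u) \<and>
        v \<in> words g (length v) \<and> length u + length v + 2 = n}"

text \<open>Hilbert function h_A(n) = dim A_n of A = K<x_0..x_(g-1)> / (rels):
  dim of the free degree-n component minus dim of the degree-n part of the ideal.\<close>
definition hilb :: "nat \<Rightarrow> (nat \<Rightarrow> nat \<Rightarrow> 'k::field) list \<Rightarrow> nat \<Rightarrow> nat" where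
  "hilb g rels n = card (words g n) - vector_space.dim fscale (ideal_deg g rels n)"

end

theory Submission
  imports Defs
begin

text \<open>Number the generators \<open>x = 0\<close>, \<open>s = 1\<close>, \<open>t = 2\<close> and \<open>y\<^sub>l = l + 3\<close> (\<open>l < d\<close>). All quadratic
  monomials except \<open>s x, x x, x t, s t, x y\<^sub>l, s y\<^sub>l, y\<^sub>0 t, y\<^sub>l x\<close> are relations; the remaining
  \<open>d + 1\<close> relations are \<open>y\<^sub>l x = \<Sum>\<^sub>k C\<^sub>l\<^sub>k x y\<^sub>k\<close>, with \<open>C\<close> the companion matrix of the
  recurrence, and \<open>s \<Sum>\<^sub>l a\<^sub>l y\<^sub>l = 0\<close>. Moving \<open>y\<^sub>l\<close> to the right through \<open>x\<^sup>m\<close> multiplies by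
  \<open>C\<^sup>m\<close>, so the last relation yields \<open>\<Sum>\<^sub>l a\<^sub>m\<^sub>+\<^sub>l s x\<^sup>m y\<^sub>l = 0\<close>. In degree \<open>n + 3\<close> this removes one of
  the words \<open>s x\<^sup>n\<^sup>+\<^sup>1 y\<^sub>l\<close>, since no \<open>d\<close> consecutive terms of the sequence vanish, and, since
  \<open>y\<^sub>l t = 0\<close> for \<open>l \<noteq> 0\<close>, it kills \<open>s x\<^sup>n y\<^sub>0 t\<close> exactly when \<open>a\<^sub>n \<noteq> 0\<close>. The surviving normal words
  span the degree \<open>n + 3\<close> component modulo the ideal, and they are independent there because each
  of them is separated from the others by a function on words that annihilates the ideal.\<close>

section \<open>Coefficient functions on words\<close>

interpretation lin: vector_space "fscale :: 'k::field \<Rightarrow> (nat list \<Rightarrow> 'k) \<Rightarrow> (nat list \<Rightarrow> 'k)"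
  by unfold_locales (auto simp: fscale_def algebra_simps fun_eq_iff)

lemma sum_fun_apply: "(sum f A) z = (\<Sum>x\<in>A. f x z)"
  by (induct A rule: infinite_finite_induct) auto

definition monomial :: "nat list \<Rightarrow> nat list \<Rightarrow> 'k::field" where
  "monomial w = (\<lambda>z. if z = w then 1 else 0)"

lemma inj_monomial: "inj (monomial :: nat list \<Rightarrow> nat list \<Rightarrow> 'k::field)"
  unfolding inj_def monomial_def fun_eq_iff by (metis zero_neq_one)

lemma independent_monomials:
  assumes "finite W"
  shows "lin.independent (monomial ` W :: (nat list \<Rightarrow> 'k::field) set)"
proof (rule lin.independent_if_scalars_zero)
  show "finite (monomial ` W :: (nat list \<Rightarrow> 'k) set)" using assms by simp
  fix c :: "(nat list \<Rightarrow> 'k) \<Rightarrow> 'k" and x :: "nat list \<Rightarrow> 'k"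
  assume zero: "(\<Sum>x\<in>monomial ` W. fscale (c x) x) = 0" and "x \<in> monomial ` W"
  then obtain w where w: "w \<in> W" "x = monomial w" by auto
  have "(\<Sum>x\<in>monomial ` W. fscale (c x) x) w = (\<Sum>v\<in>W. fscale (c (monomial v)) (monomial v) w)"
    by (simp add: sum.reindex[OF inj_on_subset[OF inj_monomial]] sum_fun_apply)
  also have "\<dots> = (\<Sum>v\<in>W. if v = w then c (monomial w) else 0)"
    by (rule sum.cong) (auto simp: fscale_def monomial_def)
  also have "\<dots> = c (monomial w)" using assms w(1) by simp
  finally show "c x = 0" using zero w by simp
qed

definition pairing :: "nat list set \<Rightarrow> (nat list \<Rightarrow> 'k::field) \<Rightarrow> (nat list \<Rightarrow> 'k) \<Rightarrow> 'k" where
  "pairing W \<phi> f = (\<Sum>z\<in>W. f z * \<phi> z)"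

lemma pairing_eq_zero_on_span:
  assumes "\<forall>g\<in>G. pairing W \<phi> g = 0" and "f \<in> lin.span G"
  shows "pairing W \<phi> f = 0"
proof -
  have "lin.subspace {f. pairing W \<phi> f = 0}"
    unfolding lin.subspace_def
    by (auto simp: pairing_def fscale_def sum.distrib distrib_right mult.assoc
        sum_distrib_left[symmetric])
  then have "lin.span G \<subseteq> {f. pairing W \<phi> f = 0}"
    using assms(1) by (intro lin.span_minimal) auto
  then show ?thesis using assms(2) by auto
qed

lemma pairing_monomial: "finite W \<Longrightarrow> w \<in> W \<Longrightarrow> pairing W \<phi> (monomial w) = \<phi> w"
  unfolding pairing_def monomial_def by (simp add: if_distrib[of "\<lambda>x. x * _"] cong: if_cong)

lemma pairing_sum_scale:
  "finite A \<Longrightarrow> pairing W \<phi> (\<Sum>x\<in>A. fscale (c x) (h x)) = (\<Sum>x\<in>A. c x * pairing W \<phi> (h x))"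
  by (simp add: pairing_def sum_fun_apply fscale_def sum_distrib_left sum_distrib_right
      mult.assoc sum.swap[of _ A])

definition separated_by_annihilators ::
    "nat list set \<Rightarrow> (nat list \<Rightarrow> 'k::field) set \<Rightarrow> nat list set \<Rightarrow> bool" where
  "separated_by_annihilators W G R \<longleftrightarrow>
     (\<forall>\<nu>\<in>R. \<exists>\<phi>. (\<forall>g\<in>G. pairing W \<phi> g = 0) \<and> \<phi> \<nu> \<noteq> 0 \<and> (\<forall>\<mu>\<in>R. \<mu> \<noteq> \<nu> \<longrightarrow> \<phi> \<mu> = 0))"

lemma separated_coefficient_eq_zero:
  fixes G :: "(nat list \<Rightarrow> 'k::field) set"
  assumes W: "finite W" "R \<subseteq> W" and sep: "separated_by_annihilators W G R"
    and comb: "(\<Sum>\<mu>\<in>R. fscale (c \<mu>) (monomial \<mu>)) \<in> lin.span G" and "\<nu> \<in> R"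
  shows "c \<nu> = 0"
proof -
  have finR: "finite R" using W finite_subset by blast
  obtain \<phi> where \<phi>: "\<forall>g\<in>G. pairing W \<phi> g = 0" "\<phi> \<nu> \<noteq> 0" "\<forall>\<mu>\<in>R. \<mu> \<noteq> \<nu> \<longrightarrow> \<phi> \<mu> = 0"
    using sep \<open>\<nu> \<in> R\<close> unfolding separated_by_annihilators_def by blast
  have "0 = pairing W \<phi> (\<Sum>\<mu>\<in>R. fscale (c \<mu>) (monomial \<mu>))"
    using pairing_eq_zero_on_span[OF \<phi>(1) comb] by simp
  also have "\<dots> = (\<Sum>\<mu>\<in>R. c \<mu> * \<phi> \<mu>)"
    unfolding pairing_sum_scale[OF finR] using W by (intro sum.cong refl) (auto simp: pairing_monomial)
  also have "\<dots> = c \<nu> * \<phi> \<nu>"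
    using \<phi>(3) \<open>\<nu> \<in> R\<close> finR by (subst sum.remove[of _ \<nu>]) (auto intro!: sum.neutral)
  finally show ?thesis using \<phi>(2) by simp
qed

lemma independent_Un_separated_monomials:
  fixes B G :: "(nat list \<Rightarrow> 'k::field) set"
  assumes W: "finite W" "R \<subseteq> W" and B: "finite B" "lin.independent B" "B \<subseteq> lin.span G"
    and sep: "separated_by_annihilators W G R"
  shows "B \<inter> monomial ` R = {}" and "lin.independent (B \<union> monomial ` R)"
proof -
  have finR: "finite R" using W finite_subset by blast
  have spanB: "lin.span B \<subseteq> lin.span G" by (rule lin.span_minimal[OF B(3) lin.subspace_span])
  show disj: "B \<inter> monomial ` R = {}"
  proof (rule ccontr)
    assume "B \<inter> monomial ` R \<noteq> {}"
    then obtain \<nu> where \<nu>: "\<nu> \<in> R" "monomial \<nu> \<in> B" by auto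
    have "(\<Sum>\<mu>\<in>R. fscale (if \<mu> = \<nu> then 1 else 0) (monomial \<mu>)) = (\<Sum>\<mu>\<in>R. if \<mu> = \<nu> then monomial \<mu> else 0)"
      by (intro sum.cong refl) (simp add: fscale_def zero_fun_def)
    also have "\<dots> = monomial \<nu>" using finR \<nu>(1) by simp
    also have "\<dots> \<in> lin.span G" using \<nu>(2) B(3) by blast
    finally have "(\<Sum>\<mu>\<in>R. fscale (if \<mu> = \<nu> then 1 else 0) (monomial \<mu>)) \<in> lin.span G" .
    from separated_coefficient_eq_zero[OF W sep this \<nu>(1)] show False by simp
  qed
  show "lin.independent (B \<union> monomial ` R)"
  proof (rule lin.independent_if_scalars_zero)
    show "finite (B \<union> monomial ` R)" using B(1) finR by auto
    fix c x assume sum0: "(\<Sum>x\<in>B \<union> monomial ` R. fscale (c x) x) = 0" and x: "x \<in> B \<union> monomial ` R"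
    define sB where "sB = (\<Sum>x\<in>B. fscale (c x) x)"
    define sR where "sR = (\<Sum>\<mu>\<in>R. fscale (c (monomial \<mu>)) (monomial \<mu>))"
    have "sB + sR = 0"
      using sum0 disj B(1) finR
      by (simp add: sB_def sR_def sum.union_disjoint sum.reindex[OF inj_on_subset[OF inj_monomial]])
    then have "sR = - sB" by (simp add: add_eq_0_iff)
    moreover have "sB \<in> lin.span B"
      unfolding sB_def by (intro lin.span_sum lin.span_scale lin.span_base)
    ultimately have "sR \<in> lin.span G" using lin.span_neg spanB by auto
    then have cR: "c (monomial \<nu>) = 0" if "\<nu> \<in> R" for \<nu>
      using separated_coefficient_eq_zero[OF W sep _ that, of "c \<circ> monomial"] unfolding sR_def by simp
    then have "sR = 0" unfolding sR_def by (intro sum.neutral) (simp add: fscale_def zero_fun_def)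
    then have "\<forall>v\<in>B. c v = 0"
      using \<open>sB + sR = 0\<close> lin.independentD[OF B(2,1)] unfolding sB_def by simp
    then show "c x = 0" using x cR by auto
  qed
qed

lemma dim_span_add_card_separated:
  fixes G :: "(nat list \<Rightarrow> 'k::field) set"
  assumes finW: "finite W" and RW: "R \<subseteq> W"
    and G_in: "G \<subseteq> lin.span (monomial ` W)"
    and spans: "monomial ` W \<subseteq> lin.span (G \<union> monomial ` R)"
    and sep: "separated_by_annihilators W G R"
  shows "lin.dim (lin.span G) + card R = card W"
proof -
  obtain B where B: "B \<subseteq> lin.span G" "lin.independent B" "lin.span G \<subseteq> lin.span B"
      "card B = lin.dim (lin.span G)"
    using lin.basis_exists[of "lin.span G"] by blast
  have finR: "finite R" using finW RW finite_subset by blast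
  have spanG: "lin.span G \<subseteq> lin.span (monomial ` W)"
    using G_in by (metis lin.span_mono lin.span_span)
  have finB: "finite B"
    using lin.independent_span_bound[of "monomial ` W" B] B(1,2) spanG finW by auto
  note BR = independent_Un_separated_monomials[OF finW RW finB B(2,1) sep]
  have "lin.span (B \<union> monomial ` R) = lin.span (monomial ` W)"
  proof
    show "lin.span (B \<union> monomial ` R) \<subseteq> lin.span (monomial ` W)"
      using B(1) spanG RW by (intro lin.span_minimal) (blast intro: lin.span_base)+
    have "G \<union> monomial ` R \<subseteq> lin.span (B \<union> monomial ` R)"
      using B(3) lin.span_mono[of B "B \<union> monomial ` R"] lin.span_superset[of G]
        lin.span_superset[of "B \<union> monomial ` R"] by blast
    then have "lin.span (G \<union> monomial ` R) \<subseteq> lin.span (B \<union> monomial ` R)"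
      by (rule lin.span_minimal[OF _ lin.subspace_span])
    then show "lin.span (monomial ` W) \<subseteq> lin.span (B \<union> monomial ` R)"
      using spans by (intro lin.span_minimal[OF _ lin.subspace_span]) blast
  qed
  then have "lin.dim (monomial ` W :: (nat list \<Rightarrow> 'k) set) = card B + card R"
    using lin.dim_eq_card[OF _ BR(2)] BR(1) finB finR
    by (simp add: card_Un_disjoint card_image inj_on_subset[OF inj_monomial])
  moreover have "lin.dim (monomial ` W :: (nat list \<Rightarrow> 'k) set) = card W"
    using lin.dim_eq_card_independent[OF independent_monomials[OF finW]]
    by (simp add: card_image inj_on_subset[OF inj_monomial])
  ultimately show ?thesis using B(4) by simp
qed

lemma subspace_solve_for_term:
  assumes T: "lin.subspace T" and "finite K" "j \<in> K" "c j \<noteq> 0"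
    and comb: "(\<Sum>k\<in>K. fscale (c k) (v k)) \<in> T" and others: "\<And>k. k \<in> K \<Longrightarrow> k \<noteq> j \<Longrightarrow> v k \<in> T"
  shows "v j \<in> T"
proof -
  have rest: "(\<Sum>k\<in>K - {j}. fscale (c k) (v k)) \<in> T"
    using others by (intro lin.subspace_sum[OF T] lin.subspace_scale[OF T]) auto
  have "(\<Sum>k\<in>K. fscale (c k) (v k)) = fscale (c j) (v j) + (\<Sum>k\<in>K - {j}. fscale (c k) (v k))"
    using assms(2,3) by (rule sum.remove)
  then have "fscale (c j) (v j) \<in> T"
    using lin.subspace_diff[OF T comb rest] by simp
  then have "fscale (inverse (c j)) (fscale (c j) (v j)) \<in> T" by (rule lin.subspace_scale[OF T])
  then show ?thesis using assms(4) by (simp add: fscale_def mult.assoc[symmetric])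
qed

section \<open>Linear recurrences\<close>

locale linear_recurrence =
  fixes a \<gamma> :: "nat \<Rightarrow> 'k::field" and d :: nat
  assumes order_pos: "1 \<le> d"
    and recurrence: "\<forall>n\<ge>d. a n = (\<Sum>i=1..d. \<gamma> i * a (n - i))"
begin

definition companion :: "nat \<Rightarrow> nat \<Rightarrow> 'k" where
  "companion k l = (if l + 1 < d then (if k = l + 1 then 1 else 0) else \<gamma> (d - k))"

fun companion_pow :: "nat \<Rightarrow> nat \<Rightarrow> nat \<Rightarrow> 'k" where
  "companion_pow 0 i l = (if i = l then 1 else 0)"
| "companion_pow (Suc b) i l = (\<Sum>k<d. companion i k * companion_pow b k l)"

lemma recurrence_window: "a (n + d) = (\<Sum>i<d. a (n + i) * \<gamma> (d - i))"
proof -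
  have "a (n + d) = (\<Sum>j=1..d. \<gamma> j * a (n + d - j))" using recurrence by simp
  also have "\<dots> = (\<Sum>i<d. a (n + i) * \<gamma> (d - i))"
    by (rule sum.reindex_bij_witness[of _ "\<lambda>i. d - i" "\<lambda>j. d - j"]) (auto simp: ac_simps)
  finally show ?thesis .
qed

lemma window_times_companion: "k < d \<Longrightarrow> (\<Sum>i<d. a (n + i) * companion i k) = a (n + k + 1)"
proof (cases "k + 1 < d")
  case True
  then have "(\<Sum>i<d. a (n + i) * companion i k) = (\<Sum>i<d. if i = k + 1 then a (n + (k + 1)) else 0)"
    by (intro sum.cong) (auto simp: companion_def)
  then show ?thesis using True by simp
next
  case False
  assume "k < d"
  then have "k = d - 1" using False by simp
  moreover have "(\<Sum>i<d. a (n + i) * companion i k) = (\<Sum>i<d. a (n + i) * \<gamma> (d - i))"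
    using False by (intro sum.cong) (auto simp: companion_def)
  ultimately show ?thesis using recurrence_window order_pos by simp
qed

lemma window_times_companion_pow:
  "l < d \<Longrightarrow> (\<Sum>i<d. a (n + i) * companion_pow b i l) = a (n + b + l)"
proof (induction b arbitrary: n)
  case 0
  then show ?case by (simp add: if_distrib[of "\<lambda>x. _ * x"] cong: if_cong)
next
  case (Suc b)
  have "(\<Sum>i<d. a (n + i) * companion_pow (Suc b) i l)
      = (\<Sum>k<d. (\<Sum>i<d. a (n + i) * companion i k) * companion_pow b k l)"
    unfolding companion_pow.simps sum_distrib_left sum_distrib_right mult.assoc
    by (rule sum.swap)
  also have "\<dots> = (\<Sum>k<d. a (Suc n + k) * companion_pow b k l)"
    by (intro sum.cong) (simp_all add: window_times_companion)
  also have "\<dots> = a (Suc n + b + l)" using Suc by blast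
  finally show ?case by simp
qed

lemma initial_window_times_companion_pow:
  "l < d \<Longrightarrow> (\<Sum>i<d. a i * companion_pow b i l) = a (b + l)"
  using window_times_companion_pow[of l 0 b] by simp

end

locale nondegenerate_recurrence = linear_recurrence a \<gamma> d
  for a \<gamma> :: "nat \<Rightarrow> 'k::field" and d +
  assumes leading_coeff_nonzero: "\<gamma> d \<noteq> 0"
    and initial_nonzero: "\<exists>i<d. a i \<noteq> 0"
begin

lemma window_nonzero: "\<exists>l<d. a (c + l) \<noteq> 0"
proof (induction c)
  case 0
  then show ?case using initial_nonzero by simp
next
  case (Suc c)
  then obtain l where l: "l < d" "a (c + l) \<noteq> 0" by blast
  show ?case
  proof (cases l)
    case (Suc l')
    then show ?thesis using l by (intro exI[of _ l']) auto
  next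
    case 0
    show ?thesis
    proof (rule ccontr)
      assume "\<not> ?thesis"
      then have zero: "\<And>m. m < d \<Longrightarrow> a (Suc c + m) = 0" by blast
      have "a (c + d) = (\<Sum>i<d. if i = 0 then a c * \<gamma> d else 0)"
        unfolding recurrence_window
        by (intro sum.cong refl) (use zero in \<open>auto simp: gr0_conv_Suc\<close>)
      also have "\<dots> = a c * \<gamma> d" using order_pos by simp
      finally have "a (c + d) = a c * \<gamma> d" .
      moreover have "a (c + d) = 0" using zero[of "d - 1"] order_pos by simp
      ultimately show False using l 0 leading_coeff_nonzero by simp
    qed
  qed
qed

end

section \<open>The relations\<close>

lemma sum_if_eq_outer:
  assumes "finite A"
  shows "(\<Sum>i\<in>A. \<Sum>j\<in>B. if i = p then g j else 0) = (if p \<in> A then \<Sum>j\<in>B. g j else 0)"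
proof -
  have "(\<Sum>j\<in>B. if i = p then g j else 0) = (if i = p then \<Sum>j\<in>B. g j else 0)" for i
    by (cases "i = p") simp_all
  then show ?thesis using assms by simp
qed

context linear_recurrence
begin

definition is_y :: "nat \<Rightarrow> bool" where
  "is_y c \<longleftrightarrow> 3 \<le> c \<and> c < d + 3"

definition allowed_pair :: "nat \<Rightarrow> nat \<Rightarrow> bool" where
  "allowed_pair p q \<longleftrightarrow> (p = 1 \<and> q = 0) \<or> (p = 0 \<and> q = 0) \<or> (p = 0 \<and> q = 2) \<or> (p = 1 \<and> q = 2)
      \<or> (p = 0 \<and> is_y q) \<or> (p = 1 \<and> is_y q) \<or> (p = 3 \<and> q = 2) \<or> (is_y p \<and> q = 0)"

definition start_rel :: "nat \<Rightarrow> nat \<Rightarrow> 'k" where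
  "start_rel i j = (if i = 1 \<and> is_y j then a (j - 3) else 0)"

definition swap_rel :: "nat \<Rightarrow> nat \<Rightarrow> nat \<Rightarrow> 'k" where
  "swap_rel l i j =
     (if i = l + 3 \<and> j = 0 then 1 else 0) - (if i = 0 \<and> is_y j then companion l (j - 3) else 0)"

definition monomial_rel :: "nat \<Rightarrow> nat \<Rightarrow> nat \<Rightarrow> nat \<Rightarrow> 'k" where
  "monomial_rel p q i j = (if i = p \<and> j = q then 1 else 0)"

definition forbidden_pairs :: "(nat \<times> nat) list" where
  "forbidden_pairs = filter (\<lambda>(p, q). \<not> allowed_pair p q) (List.product [0..<d+3] [0..<d+3])"

definition rels :: "(nat \<Rightarrow> nat \<Rightarrow> 'k) list" where
  "rels = start_rel # map swap_rel [0..<d] @ map (\<lambda>(p, q). monomial_rel p q) forbidden_pairs"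

lemma set_forbidden_pairs:
  "set forbidden_pairs = {(p, q). p < d + 3 \<and> q < d + 3 \<and> \<not> allowed_pair p q}"
  unfolding forbidden_pairs_def by auto

lemma set_rels:
  "set rels = insert start_rel (swap_rel ` {0..<d} \<union> (\<lambda>(p, q). monomial_rel p q) ` set forbidden_pairs)"
  unfolding rels_def by simp

lemma monomial_rel_in_rels:
  "p < d + 3 \<Longrightarrow> q < d + 3 \<Longrightarrow> \<not> allowed_pair p q \<Longrightarrow> monomial_rel p q \<in> set rels"
  unfolding set_rels set_forbidden_pairs by (auto intro: rev_image_eqI[of "(p, q)"])

lemma swap_rel_in_rels: "l < d \<Longrightarrow> swap_rel l \<in> set rels"
  unfolding set_rels by simp

lemma start_rel_in_rels: "start_rel \<in> set rels"
  unfolding set_rels by simp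

lemma card_allowed_pairs:
  "card {(p, q). p < d + 3 \<and> q < d + 3 \<and> allowed_pair p q} = 3 * d + 5"
proof -
  let ?Y = "{3..<d+3}"
  have "{(p, q). p < d + 3 \<and> q < d + 3 \<and> allowed_pair p q}
      = {(1, 0), (0, 0), (0, 2), (1, 2), (3, 2)} \<union> (Pair 0 ` ?Y \<union> (Pair 1 ` ?Y \<union> (\<lambda>p. (p, 0)) ` ?Y))"
    using order_pos by (auto simp: allowed_pair_def is_y_def)
  also have "card \<dots> = 5 + (d + (d + d))"
    by (subst card_Un_disjoint, auto, subst card_Un_disjoint, auto, subst card_Un_disjoint, auto)
      (auto simp: card_image inj_on_def)
  finally show ?thesis by simp
qed

lemma length_rels: "length rels = d^2 + 4*d + 5"
proof -
  let ?pairs = "List.product [0..<d+3] [0..<d+3]"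
  let ?allowed = "\<lambda>(p, q). allowed_pair p q"
  have "length (filter ?allowed ?pairs) = card (set (filter ?allowed ?pairs))"
    by (intro distinct_card[symmetric] distinct_filter distinct_product) simp_all
  also have "set (filter ?allowed ?pairs) = {(p, q). p < d + 3 \<and> q < d + 3 \<and> allowed_pair p q}"
    by auto
  finally have "length (filter ?allowed ?pairs) = 3 * d + 5"
    using card_allowed_pairs by simp
  moreover have "length (filter ?allowed ?pairs) + length forbidden_pairs = (d + 3) * (d + 3)"
    using sum_length_filter_compl[of ?allowed ?pairs]
    by (simp add: forbidden_pairs_def case_prod_unfold)
  ultimately show ?thesis unfolding rels_def by (simp add: power2_eq_square algebra_simps)
qed

lemma sum_over_ys: "(\<Sum>j<d+3. if is_y j then H j else 0) = (\<Sum>l<d. H (l + 3))"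
proof -
  have "(\<Sum>j<d+3. if is_y j then H j else 0) = (\<Sum>j\<in>{..<d+3} \<inter> {j. is_y j}. H j)"
    by (simp add: sum.inter_restrict)
  also have "{..<d+3} \<inter> {j. is_y j} = {0+3..<d+3}" by (auto simp: is_y_def)
  also have "(\<Sum>j\<in>{0+3..<d+3}. H j) = (\<Sum>l<d. H (l + 3))"
    by (subst sum.shift_bounds_nat_ivl) (simp add: atLeast0LessThan)
  finally show ?thesis .
qed

lemma sum_start_rel:
  "(\<Sum>i<d+3. \<Sum>j<d+3. start_rel i j * F i j) = (\<Sum>l<d. a l * F 1 (l + 3))"
proof -
  have "start_rel i j * F i j = (if i = 1 then if is_y j then a (j - 3) * F 1 j else 0 else 0)" for i j
    by (simp add: start_rel_def)
  then show ?thesis by (simp add: sum_if_eq_outer sum_over_ys)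
qed

lemma sum_monomial_rel:
  assumes "p < d + 3" "q < d + 3"
  shows "(\<Sum>i<d+3. \<Sum>j<d+3. monomial_rel p q i j * F i j) = F p q"
proof -
  have "monomial_rel p q i j * F i j = (if i = p then if j = q then F p q else 0 else 0)" for i j
    by (simp add: monomial_rel_def)
  then show ?thesis using assms by (simp add: sum_if_eq_outer)
qed

lemma sum_swap_rel:
  assumes "l < d"
  shows "(\<Sum>i<d+3. \<Sum>j<d+3. swap_rel l i j * F i j)
     = F (l + 3) 0 - (\<Sum>k<d. companion l k * F 0 (k + 3))"
proof -
  have "swap_rel l i j * F i j =
      (if i = l + 3 then if j = 0 then F (l + 3) 0 else 0 else 0)
      - (if i = 0 then if is_y j then companion l (j - 3) * F 0 j else 0 else 0)" for i j
    by (simp add: swap_rel_def left_diff_distrib)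
  then show ?thesis using assms by (simp add: sum_subtractf sum_if_eq_outer sum_over_ys)
qed

end

context nondegenerate_recurrence
begin

lemma rels_nonzero: "\<forall>r\<in>set rels. \<exists>i<d+3. \<exists>j<d+3. r i j \<noteq> 0"
proof
  fix r assume "r \<in> set rels"
  then consider "r = start_rel" | l where "l < d" "r = swap_rel l"
    | p q where "p < d + 3" "q < d + 3" "r = monomial_rel p q"
    unfolding set_rels set_forbidden_pairs by auto
  then show "\<exists>i<d+3. \<exists>j<d+3. r i j \<noteq> 0"
  proof cases
    case 1
    obtain l where "l < d" "a l \<noteq> 0" using initial_nonzero by blast
    moreover have "start_rel 1 (l + 3) \<noteq> 0" using \<open>l < d\<close> \<open>a l \<noteq> 0\<close> by (simp add: start_rel_def is_y_def)
    moreover have "(1::nat) < d + 3" "l + 3 < d + 3" using \<open>l < d\<close> by simp_all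
    ultimately show ?thesis using 1 by blast
  next
    case (2 l)
    then show ?thesis by (intro exI[of _ "l + 3"] exI[of _ 0]) (auto simp: swap_rel_def)
  next
    case (3 p q)
    then show ?thesis by (intro exI[of _ p] exI[of _ q]) (auto simp: monomial_rel_def)
  qed
qed

end

section \<open>Reduction modulo the ideal\<close>

lemma mem_words: "w \<in> words g n \<longleftrightarrow> length w = n \<and> set w \<subseteq> {0..<g}"
  by (simp add: words_def)

lemma finite_words: "finite (words g n)"
  using finite_lists_length_eq[of "{0..<g}" n] by (simp add: words_def conj_commute)

lemma sandwich_apply:
  "sandwich g u r v = (\<lambda>z. \<Sum>i<g. \<Sum>j<g. r i j * monomial (u @ [i, j] @ v) z)"
  unfolding sandwich_def monomial_def by (intro ext sum.cong refl) simp

lemma sum_mult_sum_swap: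
  "(\<Sum>l\<in>A. (\<Sum>k\<in>B. c k * m k l) * (f l :: 'a::comm_semiring_1))
     = (\<Sum>k\<in>B. c k * (\<Sum>l\<in>A. m k l * f l))"
  by (simp add: sum_distrib_left sum_distrib_right mult.assoc sum.swap[of _ A])

context linear_recurrence
begin

definition ideal_gens :: "nat \<Rightarrow> (nat list \<Rightarrow> 'k) set" where
  "ideal_gens N = {sandwich (d+3) u r v | u r v. r \<in> set rels \<and> u \<in> words (d+3) (length u) \<and>
        v \<in> words (d+3) (length v) \<and> length u + length v + 2 = N}"

lemma ideal_deg_eq_span: "ideal_deg (d+3) rels N = lin.span (ideal_gens N)"
  unfolding ideal_deg_def ideal_gens_def by simp

lemma sandwich_in_ideal:
  "r \<in> set rels \<Longrightarrow> set u \<subseteq> {0..<d+3} \<Longrightarrow> set v \<subseteq> {0..<d+3} \<Longrightarrow> length u + length v + 2 = N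
   \<Longrightarrow> sandwich (d+3) u r v \<in> lin.span (ideal_gens N)"
  unfolding ideal_gens_def by (rule lin.span_base) (auto simp: mem_words)

lemma sandwich_monomial_rel:
  "p < d + 3 \<Longrightarrow> q < d + 3 \<Longrightarrow> sandwich (d+3) u (monomial_rel p q) v = monomial (u @ [p, q] @ v)"
  unfolding sandwich_apply by (rule ext) (rule sum_monomial_rel)

lemma sandwich_swap_rel:
  "l < d \<Longrightarrow> sandwich (d+3) u (swap_rel l) v
     = monomial (u @ [l + 3, 0] @ v) - (\<Sum>k<d. fscale (companion l k) (monomial (u @ [0, k + 3] @ v)))"
  unfolding sandwich_apply by (rule ext) (simp add: sum_swap_rel sum_fun_apply fscale_def)

lemma sandwich_start_rel:
  "sandwich (d+3) u start_rel v = (\<Sum>l<d. fscale (a l) (monomial (u @ [1, l + 3] @ v)))"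
  unfolding sandwich_apply by (rule ext) (simp add: sum_start_rel sum_fun_apply fscale_def)

lemma forbidden_monomial_in_ideal:
  assumes "\<not> allowed_pair p q" "p < d + 3" "q < d + 3" "set u \<subseteq> {0..<d+3}" "set v \<subseteq> {0..<d+3}"
    "length u + length v + 2 = N"
  shows "monomial (u @ [p, q] @ v) \<in> lin.span (ideal_gens N)"
  using sandwich_in_ideal[OF monomial_rel_in_rels[OF assms(2,3,1)] assms(4-6)]
  by (simp add: sandwich_monomial_rel[OF assms(2,3)])

lemma y_zeros_reduction:
  "l < d \<Longrightarrow> set u \<subseteq> {0..<d+3} \<Longrightarrow> set v \<subseteq> {0..<d+3} \<Longrightarrow> length u + b + 1 + length v = N \<Longrightarrow>
   monomial (u @ (l + 3) # replicate b 0 @ v)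
     - (\<Sum>k<d. fscale (companion_pow b l k) (monomial (u @ replicate b 0 @ (k + 3) # v)))
   \<in> lin.span (ideal_gens N)"
proof (induction b arbitrary: u l)
  case 0
  have "(\<Sum>k<d. fscale (companion_pow 0 l k) (monomial (u @ (k + 3) # v))) = monomial (u @ (l + 3) # v)"
    using 0(1) by (auto simp: fun_eq_iff sum_fun_apply fscale_def if_distrib[of "\<lambda>x. x * _"]
        cong: if_cong)
  then show ?case using lin.span_zero by (simp add: zero_fun_def)
next
  case (Suc b)
  let ?A = "\<lambda>k. monomial ((u @ [0]) @ (k + 3) # replicate b 0 @ v) :: nat list \<Rightarrow> 'k"
  let ?B = "\<lambda>m. monomial ((u @ [0]) @ replicate b 0 @ (m + 3) # v) :: nat list \<Rightarrow> 'k"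
  define swap where "swap = sandwich (d+3) u (swap_rel l) (replicate b 0 @ v)"
  define rest where "rest = (\<Sum>k<d. fscale (companion l k) (?A k - (\<Sum>m<d. fscale (companion_pow b k m) (?B m))))"
  have swap_in: "swap \<in> lin.span (ideal_gens N)" unfolding swap_def
    by (rule sandwich_in_ideal) (use Suc.prems swap_rel_in_rels in auto)
  have "?A k - (\<Sum>m<d. fscale (companion_pow b k m) (?B m)) \<in> lin.span (ideal_gens N)"
    if "k < d" for k
    by (rule Suc.IH) (use Suc.prems that in auto)
  then have rest_in: "rest \<in> lin.span (ideal_gens N)"
    unfolding rest_def by (intro lin.span_sum lin.span_scale) simp
  have eq: "monomial (u @ (l + 3) # replicate (Suc b) 0 @ v)
      - (\<Sum>m<d. fscale (companion_pow (Suc b) l m) (monomial (u @ replicate (Suc b) 0 @ (m + 3) # v)))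
      = swap + rest"
    unfolding swap_def rest_def sandwich_swap_rel[OF Suc.prems(1)]
    by (auto simp: fun_eq_iff sum_fun_apply fscale_def sum_mult_sum_swap right_diff_distrib
        sum_subtractf)
  show ?case unfolding eq by (rule lin.span_add[OF swap_in rest_in])
qed

lemma y_zeros_y_in_ideal:
  assumes "k < d" "l < d" "set u \<subseteq> {0..<d+3}" "set v \<subseteq> {0..<d+3}" "length u + c + 2 + length v = N"
  shows "monomial (u @ (k + 3) # replicate c 0 @ (l + 3) # v) \<in> lin.span (ideal_gens N)"
proof -
  have yy: "monomial ((u @ replicate c 0) @ [m + 3, l + 3] @ v) \<in> lin.span (ideal_gens N)" if "m < d" for m
    by (rule forbidden_monomial_in_ideal) (use assms that in \<open>auto simp: allowed_pair_def is_y_def\<close>)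
  have "monomial (u @ (k + 3) # replicate c 0 @ (l + 3) # v)
      - (\<Sum>m<d. fscale (companion_pow c k m) (monomial (u @ replicate c 0 @ (m + 3) # (l + 3) # v)))
      \<in> lin.span (ideal_gens N)"
    by (rule y_zeros_reduction) (use assms in auto)
  moreover have "(\<Sum>m<d. fscale (companion_pow c k m) (monomial (u @ replicate c 0 @ (m + 3) # (l + 3) # v)))
      \<in> lin.span (ideal_gens N)"
    using yy by (intro lin.span_sum lin.span_scale) auto
  ultimately show ?thesis using lin.span_add by fastforce
qed

lemma start_rel_shifted_in_ideal:
  assumes "set suf \<subseteq> {0..<d+3}" "c + length suf + 2 = N"
  shows "(\<Sum>m<d. fscale (a (c + m)) (monomial (1 # replicate c 0 @ (m + 3) # suf)))
    \<in> lin.span (ideal_gens N)"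
proof -
  let ?X = "\<lambda>l. monomial ([1, l + 3] @ replicate c 0 @ suf) :: nat list \<Rightarrow> 'k"
  let ?Y = "\<lambda>m. monomial (1 # replicate c 0 @ (m + 3) # suf) :: nat list \<Rightarrow> 'k"
  define start where "start = sandwich (d+3) [] start_rel (replicate c 0 @ suf)"
  define rest where "rest = (\<Sum>l<d. fscale (a l) (?X l - (\<Sum>m<d. fscale (companion_pow c l m) (?Y m))))"
  have "start \<in> lin.span (ideal_gens N)"
    unfolding start_def by (rule sandwich_in_ideal) (use assms start_rel_in_rels in auto)
  moreover have "rest \<in> lin.span (ideal_gens N)"
    unfolding rest_def using y_zeros_reduction[of l "[1]" suf c N for l] assms
    by (intro lin.span_sum lin.span_scale) auto
  moreover have "(\<Sum>m<d. fscale (a (c + m)) (?Y m)) = start - rest"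
    unfolding start_def rest_def sandwich_start_rel
    by (auto simp: fun_eq_iff sum_fun_apply fscale_def initial_window_times_companion_pow[symmetric]
        sum_mult_sum_swap right_diff_distrib sum_subtractf)
  ultimately show ?thesis by (simp add: lin.span_diff)
qed

lemma ideal_gens_subset_span_monomials: "ideal_gens N \<subseteq> lin.span (monomial ` words (d+3) N)"
proof
  fix g assume "g \<in> ideal_gens N"
  then obtain u r v where g: "g = sandwich (d+3) u r v"
    and uv: "u \<in> words (d+3) (length u)" "v \<in> words (d+3) (length v)" "length u + length v + 2 = N"
    unfolding ideal_gens_def by blast
  have "g = (\<Sum>i<d+3. \<Sum>j<d+3. fscale (r i j) (monomial (u @ [i, j] @ v)))"
    unfolding g sandwich_apply by (rule ext) (simp add: sum_fun_apply fscale_def)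
  also have "\<dots> \<in> lin.span (monomial ` words (d+3) N)"
    using uv by (intro lin.span_sum lin.span_scale lin.span_base) (auto simp: mem_words)
  finally show "g \<in> lin.span (monomial ` words (d+3) N)" .
qed

lemma y_t_in_ideal:
  assumes "set u \<subseteq> {0..<d+3}" "length u + 2 = N" "l < d" "l \<noteq> 0"
  shows "monomial (u @ [l + 3, 2]) \<in> lin.span (ideal_gens N)"
  using forbidden_monomial_in_ideal[of "l + 3" 2 u "[]" N] assms by (simp add: allowed_pair_def is_y_def)

lemma s_zeros_y_in_subspace:
  assumes T: "lin.subspace T" "lin.span (ideal_gens N) \<subseteq> T" "m + 2 = N" and "j < d" "a (m + j) \<noteq> 0"
    and others: "\<And>k. k < d \<Longrightarrow> k \<noteq> j \<Longrightarrow> monomial (1 # replicate m 0 @ [k + 3]) \<in> T"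
  shows "monomial (1 # replicate m 0 @ [j + 3]) \<in> T"
proof (rule subspace_solve_for_term[OF T(1) finite_lessThan, where c = "\<lambda>k. a (m + k)"
      and v = "\<lambda>k. monomial (1 # replicate m 0 @ [k + 3])" and j = j])
  show "(\<Sum>k<d. fscale (a (m + k)) (monomial (1 # replicate m 0 @ [k + 3]))) \<in> T"
    using start_rel_shifted_in_ideal[of "[]" m N] T(2,3) by auto
qed (use assms in auto)

lemma s_zeros_y0_t_in_ideal:
  assumes "a n \<noteq> 0"
  shows "monomial (1 # replicate n 0 @ [3, 2]) \<in> lin.span (ideal_gens (n + 3))"
proof -
  have "monomial (1 # replicate n 0 @ [0 + 3, 2]) \<in> lin.span (ideal_gens (n + 3))"
  proof (rule subspace_solve_for_term[OF lin.subspace_span finite_lessThan, where c = "\<lambda>k. a (n + k)"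
        and v = "\<lambda>k. monomial (1 # replicate n 0 @ [k + 3, 2])" and j = 0])
    show "(\<Sum>k<d. fscale (a (n + k)) (monomial (1 # replicate n 0 @ [k + 3, 2])))
        \<in> lin.span (ideal_gens (n + 3))"
      using start_rel_shifted_in_ideal[of "[2]" n "n + 3"] by simp
    show "monomial (1 # replicate n 0 @ [k + 3, 2]) \<in> lin.span (ideal_gens (n + 3))"
      if "k \<in> {..<d}" "k \<noteq> 0" for k
      using y_t_in_ideal[of "1 # replicate n 0" "n + 3" k] that by (simp add: set_replicate_conv_if)
  qed (use order_pos assms in auto)
  then show ?thesis by simp
qed

end

lemma strip_leading_letter:
  assumes "\<And>s1 s2. s = s1 @ c # s2 \<Longrightarrow> s1 = []"
  obtains pre s' where "s = pre @ s'" "pre \<in> {[], [c]}" "c \<notin> set s'"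
proof (cases "\<exists>s'. s = c # s'")
  case True
  then obtain s' where s': "s = c # s'" by blast
  have "c \<notin> set s'"
  proof
    assume "c \<in> set s'"
    then obtain t1 t2 where "s = (c # t1) @ c # t2" using s' by (auto dest: split_list)
    then show False using assms by blast
  qed
  then show ?thesis using that[of "[c]" s'] s' by simp
next
  case False
  have "c \<notin> set s"
  proof
    assume "c \<in> set s"
    then obtain t1 t2 where "s = t1 @ c # t2" by (auto dest: split_list)
    then show False using assms[of t1 t2] False by simp
  qed
  then show ?thesis using that[of "[]" s] by simp
qed

lemma zeros_between_s_and_t:
  assumes letters: "set s \<subseteq> {0, 1, 2::nat}"
    and s_first: "\<And>s1 s2. s = s1 @ 1 # s2 \<Longrightarrow> s1 = []"
    and t_last: "\<And>s1 s2. s = s1 @ 2 # s2 \<Longrightarrow> s2 = []"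
  obtains pre m suf where "s = pre @ replicate m 0 @ suf" "pre \<in> {[], [1]}" "suf \<in> {[], [2]}"
proof -
  obtain pre s' where pre: "s = pre @ s'" "pre \<in> {[], [1]}" "1 \<notin> set s'"
    by (rule strip_leading_letter[OF s_first])
  have "s1 = []" if "rev s' = s1 @ 2 # s2" for s1 s2
  proof -
    have "s = (pre @ rev s2) @ 2 # rev s1" using arg_cong[OF that, of rev] pre(1) by simp
    then show ?thesis using t_last by blast
  qed
  then obtain suf' s'' where suf: "rev s' = suf' @ s''" "suf' \<in> {[], [2]}" "2 \<notin> set s''"
    by (rule strip_leading_letter)
  have "\<forall>z\<in>set s''. z = 0"
  proof
    fix z assume "z \<in> set s''"
    moreover have "set s'' \<subseteq> set s" using arg_cong[OF suf(1), of set] pre(1) by auto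
    ultimately show "z = 0" using letters pre(3) suf(3) arg_cong[OF suf(1), of set] by auto
  qed
  then have "s'' = replicate (length s'') 0" by (simp add: replicate_length_same)
  then have "rev s'' = replicate (length s'') 0" by (metis rev_replicate)
  then have "s = pre @ replicate (length s'') 0 @ rev suf'"
    using pre(1) arg_cong[OF suf(1), of rev] by simp
  moreover have "rev suf' \<in> {[], [2]}" using suf(2) by auto
  ultimately show ?thesis using that pre(2) by blast
qed

context linear_recurrence
begin

definition allowed_word :: "nat list \<Rightarrow> bool" where
  "allowed_word w \<longleftrightarrow> (\<forall>u p q v. w = u @ [p, q] @ v \<longrightarrow> allowed_pair p q)"

lemma allowed_word_s_first:
  assumes "allowed_word w" "w = s1 @ 1 # s2"
  shows "s1 = []"
proof (cases s1 rule: rev_cases)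
  case (snoc u p)
  then have "w = u @ [p, 1] @ s2" using assms(2) by simp
  then have "allowed_pair p 1" using assms(1) unfolding allowed_word_def by blast
  then show ?thesis by (simp add: allowed_pair_def is_y_def)
qed

lemma allowed_word_t_last:
  assumes "allowed_word w" "w = s1 @ 2 # s2"
  shows "s2 = []"
proof (cases s2)
  case (Cons q v)
  then have "w = s1 @ [2, q] @ v" using assms(2) by simp
  then have "allowed_pair 2 q" using assms(1) unfolding allowed_word_def by blast
  then show ?thesis by (simp add: allowed_pair_def is_y_def)
qed

lemma allowed_word_suffix_shape:
  assumes w: "allowed_word (u @ c # v)" and letters: "set v \<subseteq> {0, 1, 2}"
  obtains b suf where "v = replicate b 0 @ suf" "suf \<in> {[], [2]}"
proof -
  have no_s: "1 \<notin> set v"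
  proof
    assume "1 \<in> set v"
    then obtain s1 s2 where "v = s1 @ 1 # s2" by (auto dest: split_list)
    then show False using allowed_word_s_first[OF w, of "u @ c # s1" s2] by simp
  qed
  then have s_first: "v = s1 @ 1 # s2 \<Longrightarrow> s1 = []" for s1 s2 by simp
  have t_last: "v = s1 @ 2 # s2 \<Longrightarrow> s2 = []" for s1 s2
    using allowed_word_t_last[OF w, of "u @ c # s1" s2] by simp
  obtain pre b suf where "v = pre @ replicate b 0 @ suf" "pre \<in> {[], [1]}" "suf \<in> {[], [2]}"
    by (rule zeros_between_s_and_t[OF letters s_first t_last])
  then show ?thesis using no_s that[of b suf] by auto
qed

lemma allowed_word_prefix_shape:
  assumes w: "allowed_word (u @ c # v)" and letters: "set u \<subseteq> {0, 1, 2}"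
  obtains pre m where "u = pre @ replicate m 0" "pre \<in> {[], [1]}"
proof -
  have no_t: "2 \<notin> set u"
  proof
    assume "2 \<in> set u"
    then obtain s1 s2 where "u = s1 @ 2 # s2" by (auto dest: split_list)
    then show False using allowed_word_t_last[OF w, of s1 "s2 @ c # v"] by simp
  qed
  have s_first: "u = s1 @ 1 # s2 \<Longrightarrow> s1 = []" for s1 s2
    using allowed_word_s_first[OF w, of s1 "s2 @ c # v"] by simp
  have t_last: "u = s1 @ 2 # s2 \<Longrightarrow> s2 = []" for s1 s2 using no_t by simp
  obtain pre m suf where "u = pre @ replicate m 0 @ suf" "pre \<in> {[], [1]}" "suf \<in> {[], [2]}"
    by (rule zeros_between_s_and_t[OF letters s_first t_last])
  then show ?thesis using no_t that[of pre m] by auto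
qed

lemma allowed_word_middle_zero:
  assumes "allowed_word (u @ z # v)" "u \<noteq> []" "v \<noteq> []" "z \<in> {0, 1, 2}"
  shows "z = 0"
  using allowed_word_s_first[OF assms(1), of u v] allowed_word_t_last[OF assms(1), of u v] assms(2-4)
  by auto

lemma allowed_word_between_zeros:
  assumes "allowed_word (u @ c # z @ c' # v)" "set z \<subseteq> {0, 1, 2}"
  shows "z = replicate (length z) 0"
proof -
  have "x = 0" if "x \<in> set z" for x
  proof -
    obtain z1 z2 where "z = z1 @ x # z2" using \<open>x \<in> set z\<close> by (auto dest: split_list)
    then have "allowed_word ((u @ c # z1) @ x # (z2 @ c' # v))" using assms(1) by simp
    then show ?thesis by (rule allowed_word_middle_zero) (use assms(2) that in auto)
  qed
  then show ?thesis by (simp add: replicate_length_same)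
qed

lemma allowed_word_cases:
  assumes w: "set w \<subseteq> {0..<d+3}" "allowed_word w"
  obtains (no_y) pre m suf where
      "pre \<in> {[], [1]}" "suf \<in> {[], [2]}" "w = pre @ replicate m 0 @ suf"
    | (one_y) pre m l b suf where
      "pre \<in> {[], [1]}" "suf \<in> {[], [2]}" "l < d" "w = pre @ replicate m 0 @ (l + 3) # replicate b 0 @ suf"
    | (two_ys) u k c l v where "k < d" "l < d" "w = u @ (k + 3) # replicate c 0 @ (l + 3) # v"
proof -
  have letters: "set z \<subseteq> {0, 1, 2}" if "set z \<subseteq> set w" "\<forall>x\<in>set z. \<not> is_y x" for z
  proof
    fix x assume "x \<in> set z"
    then have "x < d + 3" "\<not> is_y x" using that w(1) by auto
    then show "x \<in> {0, 1, 2}" by (auto simp: is_y_def)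
  qed
  have y_index: "\<exists>l<d. c = l + 3" if "is_y c" for c
    using that by (intro exI[of _ "c - 3"]) (auto simp: is_y_def)
  show ?thesis
  proof (cases "\<exists>z\<in>set w. is_y z")
    case False
    have "set w \<subseteq> {0, 1, 2}" using letters[of w] False by blast
    then obtain pre m suf where "w = pre @ replicate m 0 @ suf" "pre \<in> {[], [1]}" "suf \<in> {[], [2]}"
      by (rule zeros_between_s_and_t[OF _ allowed_word_s_first[OF w(2)] allowed_word_t_last[OF w(2)]])
    then show ?thesis using no_y by blast
  next
    case True
    then obtain u c v where uv: "w = u @ c # v" "is_y c" "\<forall>z\<in>set v. \<not> is_y z"
      using split_list_last_prop[of w is_y] by blast
    obtain l where l: "l < d" "c = l + 3" using y_index uv(2) by blast
    have w': "allowed_word (u @ c # v)" using w(2) uv(1) by simp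
    have "set v \<subseteq> {0, 1, 2}" using letters[of v] uv by auto
    then obtain b suf where v: "v = replicate b 0 @ suf" "suf \<in> {[], [2]}"
      by (rule allowed_word_suffix_shape[OF w'])
    show ?thesis
    proof (cases "\<exists>z\<in>set u. is_y z")
      case True
      then obtain u1 c' z where u: "u = u1 @ c' # z" "is_y c'" "\<forall>x\<in>set z. \<not> is_y x"
        using split_list_last_prop[of u is_y] by blast
      obtain k where k: "k < d" "c' = k + 3" using y_index u(2) by blast
      have "allowed_word (u1 @ c' # z @ c # v)" using w' u(1) by simp
      moreover have "set z \<subseteq> {0, 1, 2}" using letters[of z] uv(1) u(1,3) by auto
      ultimately have z: "z = replicate (length z) 0" by (rule allowed_word_between_zeros)
      have "w = u1 @ (k + 3) # z @ (l + 3) # v" using uv(1) u(1) k(2) l(2) by simp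
      then have "w = u1 @ (k + 3) # replicate (length z) 0 @ (l + 3) # v" by (subst (asm) z)
      then show ?thesis by (rule two_ys[OF k(1) l(1)])
    next
      case False
      have "set u \<subseteq> {0, 1, 2}" using letters[of u] False uv(1) by auto
      then obtain pre m where "u = pre @ replicate m 0" "pre \<in> {[], [1]}"
        by (rule allowed_word_prefix_shape[OF w'])
      then show ?thesis using one_y[of pre suf l m b] v uv(1) l by simp
    qed
  qed
qed

lemma monomial_in_subspace_by_reduction:
  assumes w: "w \<in> words (d+3) N"
    and T: "lin.subspace T" "lin.span (ideal_gens N) \<subseteq> T"
    and no_y: "\<And>pre m suf. pre \<in> {[], [1]} \<Longrightarrow> suf \<in> {[], [2]} \<Longrightarrow>
        length pre + m + length suf = N \<Longrightarrow> monomial (pre @ replicate m 0 @ suf) \<in> T"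
    and one_y: "\<And>pre m l suf. pre \<in> {[], [1]} \<Longrightarrow> suf \<in> {[], [2]} \<Longrightarrow> l < d \<Longrightarrow>
        length pre + m + 1 + length suf = N \<Longrightarrow> monomial (pre @ replicate m 0 @ (l + 3) # suf) \<in> T"
  shows "monomial w \<in> T"
proof -
  have len: "length w = N" and letters: "set w \<subseteq> {0..<d+3}" using w by (simp_all add: mem_words)
  show ?thesis
  proof (cases "allowed_word w")
    case False
    then obtain u p q v where "w = u @ [p, q] @ v" "\<not> allowed_pair p q"
      unfolding allowed_word_def by blast
    then have "monomial w \<in> lin.span (ideal_gens N)"
      using forbidden_monomial_in_ideal letters len by auto
    then show ?thesis using T(2) by blast
  next
    case True
    from letters True show ?thesis
    proof (cases rule: allowed_word_cases)
      case (no_y pre m suf)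
      then show ?thesis using assms(4) len by simp
    next
      case (one_y pre m l b suf)
      have w_eq: "w = (pre @ replicate m 0) @ (l + 3) # replicate b 0 @ suf" using one_y by simp
      let ?w' = "\<lambda>k. monomial ((pre @ replicate m 0) @ replicate b 0 @ (k + 3) # suf) :: nat list \<Rightarrow> 'k"
      have "monomial w - (\<Sum>k<d. fscale (companion_pow b l k) (?w' k)) \<in> lin.span (ideal_gens N)"
        unfolding w_eq by (rule y_zeros_reduction) (use one_y len in auto)
      moreover have "?w' k \<in> T" if "k < d" for k
        using assms(5)[of pre suf k "m + b"] one_y len that by (simp add: replicate_add)
      then have "(\<Sum>k<d. fscale (companion_pow b l k) (?w' k)) \<in> T"
        by (intro lin.subspace_sum[OF T(1)] lin.subspace_scale[OF T(1)]) auto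
      ultimately show ?thesis using T lin.subspace_add by fastforce
    next
      case (two_ys u k c l v)
      then have "monomial w \<in> lin.span (ideal_gens N)"
        using y_zeros_y_in_ideal letters len by auto
      then show ?thesis using T(2) by blast
    qed
  qed
qed

end

section \<open>Functions on words annihilating the ideal\<close>

lemma pairing_sandwich:
  assumes "u \<in> words g (length u)" "v \<in> words g (length v)" "length u + length v + 2 = N"
  shows "pairing (words g N) \<phi> (sandwich g u r v) = (\<Sum>i<g. \<Sum>j<g. r i j * \<phi> (u @ [i, j] @ v))"
proof -
  have "pairing (words g N) \<phi> (sandwich g u r v) =
      (\<Sum>i<g. \<Sum>j<g. \<Sum>z\<in>words g N. if z = u @ [i, j] @ v then r i j * \<phi> z else 0)"
    unfolding pairing_def sandwich_def
    by (simp add: sum_distrib_right if_distrib[of "\<lambda>x. x * _"] sum.swap[of _ "words g N"]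
        cong: if_cong)
  also have "\<dots> = (\<Sum>i<g. \<Sum>j<g. r i j * \<phi> (u @ [i, j] @ v))"
    using assms by (intro sum.cong refl) (auto simp: sum.delta' finite_words mem_words)
  finally show ?thesis .
qed

lemma sum_if_const: "(\<Sum>l\<in>A. if P then f l else 0) = (if P then (\<Sum>l\<in>A. f l) else 0)"
  by (cases P) simp_all

context linear_recurrence
begin

text \<open>\<open>y_position w = Some (m, l, b)\<close> iff \<open>w = x\<^sup>m y\<^sub>l x\<^sup>b\<close>.\<close>

fun y_position :: "nat list \<Rightarrow> (nat \<times> nat \<times> nat) option" where
  "y_position [] = None"
| "y_position (c # w) = (if c = 0 then map_option (\<lambda>(m, l, b). (Suc m, l, b)) (y_position w)
     else if is_y c \<and> (\<forall>z\<in>set w. z = 0) then Some (0, c - 3, length w) else None)"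

lemma y_position_SomeD:
  "y_position w = Some (m, l, b) \<Longrightarrow> w = replicate m 0 @ (l + 3) # replicate b 0 \<and> l < d"
proof (induction w arbitrary: m)
  case (Cons c w)
  show ?case
  proof (cases "c = 0")
    case True
    then show ?thesis using Cons by (cases m) (auto split: if_splits)
  next
    case False
    then show ?thesis using Cons.prems by (auto simp: is_y_def replicate_length_same split: if_splits)
  qed
qed simp

lemma y_position_replicate_append:
  "y_position (replicate m 0 @ w) = map_option (\<lambda>(m', l, b). (m' + m, l, b)) (y_position w)"
  by (induction m) (auto simp: option.map_comp comp_def case_prod_unfold option.map_ident)

lemma y_position_zeros: "y_position (replicate m 0) = None"
  using y_position_replicate_append[of m "[]"] by simp

lemma y_position_zeros_y_zeros:
  "l < d \<Longrightarrow> y_position (replicate m 0 @ (l + 3) # replicate b 0) = Some (m, l, b)"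
  by (simp add: y_position_replicate_append is_y_def)

lemma y_position_split:
  assumes "y_position (u @ c # v) = Some p" "c \<noteq> 0"
  shows "(\<forall>z\<in>set u. z = 0) \<and> (\<forall>z\<in>set v. z = 0) \<and> is_y c"
proof -
  obtain m l b where w: "u @ c # v = replicate m 0 @ (l + 3) # replicate b 0" and "l < d"
    using assms(1) y_position_SomeD by (cases p) blast
  have "filter (\<lambda>z. z \<noteq> 0) (u @ c # v) = filter (\<lambda>z. z \<noteq> 0) (replicate m 0 @ (l + 3) # replicate b 0)"
    by (simp only: w)
  then have "filter (\<lambda>z. z \<noteq> 0) u @ c # filter (\<lambda>z. z \<noteq> 0) v = [l + 3]"
    using assms(2) by simp
  then show ?thesis using \<open>l < d\<close>
    by (auto simp: append_eq_Cons_conv Cons_eq_append_conv filter_empty_conv is_y_def)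
qed

text \<open>Functions on words that will turn out to annihilate the ideal: \<open>along_y h\<close> takes the value
  \<open>h b l\<close> on \<open>x\<^sup>m y\<^sub>l x\<^sup>b\<close> and vanishes elsewhere; \<open>after_s\<close> and \<open>before_t\<close> shift a function past a
  leading \<open>s\<close> resp. a trailing \<open>t\<close>.\<close>

definition along_y :: "(nat \<Rightarrow> nat \<Rightarrow> 'k) \<Rightarrow> nat list \<Rightarrow> 'k" where
  "along_y h w = (case y_position w of None \<Rightarrow> 0 | Some (m, l, b) \<Rightarrow> h b l)"

definition after_s :: "(nat list \<Rightarrow> 'k) \<Rightarrow> nat list \<Rightarrow> 'k" where
  "after_s \<psi> w = (case w of [] \<Rightarrow> 0 | c # w' \<Rightarrow> if c = 1 then \<psi> w' else 0)"

definition before_t :: "(nat list \<Rightarrow> 'k) \<Rightarrow> nat list \<Rightarrow> 'k" where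
  "before_t \<psi> w = (if w \<noteq> [] \<and> last w = 2 then \<psi> (butlast w) else 0)"

definition avoids_forbidden :: "(nat list \<Rightarrow> 'k) \<Rightarrow> bool" where
  "avoids_forbidden \<phi> \<longleftrightarrow> (\<forall>u p q v. \<phi> (u @ [p, q] @ v) \<noteq> 0 \<longrightarrow> allowed_pair p q)"

definition starts_with_x_or_y :: "(nat list \<Rightarrow> 'k) \<Rightarrow> bool" where
  "starts_with_x_or_y \<phi> \<longleftrightarrow> (\<forall>c v. \<phi> (c # v) \<noteq> 0 \<longrightarrow> c = 0 \<or> is_y c)"

definition avoids_s :: "(nat list \<Rightarrow> 'k) \<Rightarrow> bool" where
  "avoids_s \<phi> \<longleftrightarrow> (\<forall>w. \<phi> w \<noteq> 0 \<longrightarrow> 1 \<notin> set w)"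

definition respects_swaps :: "(nat list \<Rightarrow> 'k) \<Rightarrow> bool" where
  "respects_swaps \<phi> \<longleftrightarrow>
     (\<forall>l<d. \<forall>u v. \<phi> (u @ [l + 3, 0] @ v) = (\<Sum>k<d. companion l k * \<phi> (u @ [0, k + 3] @ v)))"

definition respects_start :: "nat \<Rightarrow> (nat list \<Rightarrow> 'k) \<Rightarrow> bool" where
  "respects_start N \<phi> \<longleftrightarrow>
     (\<forall>u v. length u + length v + 2 = N \<longrightarrow> (\<Sum>l<d. a l * \<phi> (u @ [1, l + 3] @ v)) = 0)"

definition annihilates :: "nat \<Rightarrow> (nat list \<Rightarrow> 'k) \<Rightarrow> bool" where
  "annihilates N \<phi> \<longleftrightarrow> (\<forall>g\<in>ideal_gens N. pairing (words (d+3) N) \<phi> g = 0)"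

lemma annihilatesI:
  assumes "avoids_forbidden \<phi>" "respects_swaps \<phi>" "respects_start N \<phi>"
  shows "annihilates N \<phi>"
  unfolding annihilates_def
proof
  fix g assume "g \<in> ideal_gens N"
  then obtain u r v where g: "g = sandwich (d+3) u r v" and r: "r \<in> set rels"
    and uv: "u \<in> words (d+3) (length u)" "v \<in> words (d+3) (length v)" and len: "length u + length v + 2 = N"
    unfolding ideal_gens_def by blast
  have pairing_g: "pairing (words (d+3) N) \<phi> g = (\<Sum>i<d+3. \<Sum>j<d+3. r i j * \<phi> (u @ [i, j] @ v))"
    unfolding g by (rule pairing_sandwich[OF uv len])
  from r consider "r = start_rel" | l where "l < d" "r = swap_rel l"
    | p q where "p < d + 3" "q < d + 3" "\<not> allowed_pair p q" "r = monomial_rel p q"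
    unfolding set_rels set_forbidden_pairs by auto
  then have "(\<Sum>i<d+3. \<Sum>j<d+3. r i j * \<phi> (u @ [i, j] @ v)) = 0"
  proof cases
    case 1
    then show ?thesis using assms(3) len by (simp add: sum_start_rel respects_start_def)
  next
    case (2 l)
    then show ?thesis using assms(2) by (simp add: sum_swap_rel respects_swaps_def)
  next
    case (3 p q)
    then show ?thesis using assms(1) by (auto simp: sum_monomial_rel avoids_forbidden_def)
  qed
  then show "pairing (words (d+3) N) \<phi> g = 0" using pairing_g by simp
qed

lemma respects_start_if_avoids_s: "avoids_s \<phi> \<Longrightarrow> respects_start N \<phi>"
  unfolding avoids_s_def respects_start_def by (auto intro!: sum.neutral)

lemma along_y_y_first:
  "l < d \<Longrightarrow> along_y h ((l + 3) # v) = (if \<forall>z\<in>set v. z = 0 then h (length v) l else 0)"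
  by (auto simp: along_y_def is_y_def)

lemma along_y_respects_swaps:
  assumes companion_step: "\<And>b l. h (Suc b) l = (\<Sum>k<d. companion l k * h b k)"
  shows "respects_swaps (along_y h)"
  unfolding respects_swaps_def
proof (intro allI impI)
  fix l u v assume l: "l < d"
  show "along_y h (u @ [l + 3, 0] @ v) = (\<Sum>k<d. companion l k * along_y h (u @ [0, k + 3] @ v))"
  proof (cases "(\<forall>z\<in>set u. z = 0) \<and> (\<forall>z\<in>set v. z = 0)")
    case True
    then have u: "u = replicate (length u) 0" and v: "v = replicate (length v) 0"
      by (simp_all add: replicate_length_same)
    have "y_position (u @ [l + 3, 0] @ v) = Some (length u, l, Suc (length v))"
      using y_position_zeros_y_zeros[OF l, of "length u" "Suc (length v)"] u v
      by (metis append_Cons append_Nil replicate_Suc)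
    moreover have "y_position (u @ [0, k + 3] @ v) = Some (Suc (length u), k, length v)" if "k < d" for k
      using y_position_zeros_y_zeros[OF that, of "Suc (length u)" "length v"] u v
      by (metis append_Cons append_Nil replicate_Suc replicate_app_Cons_same append.assoc)
    ultimately show ?thesis using companion_step by (simp add: along_y_def)
  next
    case False
    have "y_position (u @ (l + 3) # 0 # v) = None"
      using y_position_split[of u "l + 3" "0 # v"] False by (cases "y_position (u @ (l + 3) # 0 # v)") auto
    moreover have "y_position ((u @ [0]) @ (k + 3) # v) = None" for k
      using y_position_split[of "u @ [0]" "k + 3" v] False
      by (cases "y_position ((u @ [0]) @ (k + 3) # v)") auto
    ultimately show ?thesis by (simp add: along_y_def)
  qed
qed

lemma after_s_respects_swaps: "respects_swaps \<psi> \<Longrightarrow> respects_swaps (after_s \<psi>)"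
  unfolding respects_swaps_def
proof (intro allI impI)
  fix l u v assume "\<forall>l<d. \<forall>u v. \<psi> (u @ [l + 3, 0] @ v) = (\<Sum>k<d. companion l k * \<psi> (u @ [0, k + 3] @ v))"
    and "l < d"
  then show "after_s \<psi> (u @ [l + 3, 0] @ v) = (\<Sum>k<d. companion l k * after_s \<psi> (u @ [0, k + 3] @ v))"
    by (cases u) (simp_all add: after_s_def)
qed

lemma before_t_respects_swaps: "respects_swaps \<psi> \<Longrightarrow> respects_swaps (before_t \<psi>)"
  unfolding respects_swaps_def before_t_def by (auto simp: butlast_append)

lemma along_y_avoids_forbidden: "avoids_forbidden (along_y h)"
  unfolding avoids_forbidden_def
proof (intro allI impI)
  fix u p q v assume "along_y h (u @ [p, q] @ v) \<noteq> 0"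
  then obtain pos where pos: "y_position (u @ [p, q] @ v) = Some pos"
    by (auto simp: along_y_def split: option.splits)
  show "allowed_pair p q"
  proof (cases "p = 0")
    case False
    then show ?thesis using y_position_split[of u p "q # v" pos] pos by (simp add: allowed_pair_def)
  next
    case True
    then show ?thesis
      using y_position_split[of "u @ [p]" q v pos] pos by (cases "q = 0") (auto simp: allowed_pair_def)
  qed
qed

lemma along_y_starts_with_x_or_y: "starts_with_x_or_y (along_y h)"
  unfolding starts_with_x_or_y_def along_y_def by (auto split: option.splits if_splits)

lemma along_y_avoids_s: "avoids_s (along_y h)"
  unfolding avoids_s_def
proof (intro allI impI notI)
  fix w assume "along_y h w \<noteq> 0" "1 \<in> set w"
  then obtain pos u v where "y_position w = Some pos" "w = u @ 1 # v"
    by (auto simp: along_y_def split: option.splits dest: split_list)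
  then show False using y_position_split[of u 1 v pos] by (simp add: is_y_def)
qed

lemma before_t_along_y_avoids_forbidden:
  assumes "\<And>l. l \<noteq> 0 \<Longrightarrow> h 0 l = 0"
  shows "avoids_forbidden (before_t (along_y h))"
  unfolding avoids_forbidden_def
proof (intro allI impI)
  fix u p q v assume nz: "before_t (along_y h) (u @ [p, q] @ v) \<noteq> 0"
  show "allowed_pair p q"
  proof (cases "v = []")
    case False
    then have "along_y h (u @ [p, q] @ butlast v) \<noteq> 0"
      using nz by (simp add: before_t_def butlast_append split: if_splits)
    then show ?thesis using along_y_avoids_forbidden unfolding avoids_forbidden_def by blast
  next
    case True
    then have q: "q = 2" and nz': "along_y h (u @ [p]) \<noteq> 0"
      using nz by (simp_all add: before_t_def butlast_append split: if_splits)
    then obtain m l b where pos: "y_position (u @ [p]) = Some (m, l, b)"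
      by (auto simp: along_y_def split: option.splits)
    then have u: "u @ [p] = replicate m 0 @ (l + 3) # replicate b 0" using y_position_SomeD by blast
    have "h b l \<noteq> 0" using nz' pos by (simp add: along_y_def)
    show ?thesis
    proof (cases b)
      case 0
      then have "p = l + 3" "l = 0" using u assms \<open>h b l \<noteq> 0\<close> by (auto simp: append_eq_append_conv2)
      then show ?thesis using q by (simp add: allowed_pair_def)
    next
      case (Suc b')
      then have "p = 0" using arg_cong[OF u, of last] by simp
      then show ?thesis using q by (simp add: allowed_pair_def)
    qed
  qed
qed

lemma before_t_along_y_starts_with_x_or_y: "starts_with_x_or_y (before_t (along_y h))"
  unfolding starts_with_x_or_y_def
proof (intro allI impI)
  fix c v assume nz: "before_t (along_y h) (c # v) \<noteq> 0"
  show "c = 0 \<or> is_y c"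
  proof (cases "v = []")
    case True
    then show ?thesis using nz by (simp add: before_t_def along_y_def split: if_splits)
  next
    case False
    then have "along_y h (c # butlast v) \<noteq> 0" using nz by (simp add: before_t_def split: if_splits)
    then show ?thesis using along_y_starts_with_x_or_y unfolding starts_with_x_or_y_def by blast
  qed
qed

lemma before_t_along_y_avoids_s: "avoids_s (before_t (along_y h))"
  unfolding avoids_s_def
proof (intro allI impI)
  fix w assume "before_t (along_y h) w \<noteq> 0"
  then have "w \<noteq> []" "last w = 2" and nz: "along_y h (butlast w) \<noteq> 0"
    by (simp_all add: before_t_def split: if_splits)
  then have w: "w = butlast w @ [2]" by (metis append_butlast_last_id)
  have "1 \<notin> set (butlast w)" using along_y_avoids_s nz unfolding avoids_s_def by blast
  then show "1 \<notin> set w" by (subst w) simp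
qed

lemma after_s_avoids_forbidden:
  "avoids_forbidden \<psi> \<Longrightarrow> starts_with_x_or_y \<psi> \<Longrightarrow> avoids_forbidden (after_s \<psi>)"
  unfolding avoids_forbidden_def starts_with_x_or_y_def
proof (intro allI impI)
  fix u p q v
  assume fb: "\<forall>u p q v. \<psi> (u @ [p, q] @ v) \<noteq> 0 \<longrightarrow> allowed_pair p q"
    and hd: "\<forall>c v. \<psi> (c # v) \<noteq> 0 \<longrightarrow> c = 0 \<or> is_y c"
    and nz: "after_s \<psi> (u @ [p, q] @ v) \<noteq> 0"
  show "allowed_pair p q"
  proof (cases u)
    case Nil
    then have "p = 1" "\<psi> (q # v) \<noteq> 0" using nz by (simp_all add: after_s_def split: if_splits)
    then show ?thesis using hd by (auto simp: allowed_pair_def)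
  next
    case (Cons c u')
    then have "\<psi> (u' @ [p, q] @ v) \<noteq> 0" using nz by (simp add: after_s_def split: if_splits)
    then show ?thesis using fb by blast
  qed
qed

lemma after_s_respects_start:
  assumes "avoids_s \<psi>" and first: "\<And>v. length v + 2 = N \<Longrightarrow> (\<Sum>l<d. a l * \<psi> ((l + 3) # v)) = 0"
  shows "respects_start N (after_s \<psi>)"
  unfolding respects_start_def
proof (intro allI impI)
  fix u v :: "nat list" assume len: "length u + length v + 2 = N"
  show "(\<Sum>l<d. a l * after_s \<psi> (u @ [1, l + 3] @ v)) = 0"
  proof (cases u)
    case Nil
    then show ?thesis using first[of v] len by (simp add: after_s_def)
  next
    case (Cons c u')
    have "\<psi> (u' @ [1, l + 3] @ v) = 0" for l using assms(1) unfolding avoids_s_def by fastforce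
    then show ?thesis using Cons by (auto simp: after_s_def intro!: sum.neutral)
  qed
qed

lemma after_s_along_y_respects_start:
  assumes "(\<Sum>l<d. a l * h (N - 2) l) = 0"
  shows "respects_start N (after_s (along_y h))"
proof (rule after_s_respects_start[OF along_y_avoids_s])
  fix v :: "nat list" assume len: "length v + 2 = N"
  have "(\<Sum>l<d. a l * along_y h ((l + 3) # v))
      = (\<Sum>l<d. if \<forall>z\<in>set v. z = 0 then a l * h (N - 2) l else 0)"
    using len by (intro sum.cong refl) (auto simp: along_y_y_first)
  then show "(\<Sum>l<d. a l * along_y h ((l + 3) # v)) = 0" using assms by (simp add: sum_if_const)
qed

lemma after_s_before_t_along_y_respects_start:
  assumes "(\<Sum>l<d. a l * h (N - 3) l) = 0"
  shows "respects_start N (after_s (before_t (along_y h)))"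
proof (rule after_s_respects_start[OF before_t_along_y_avoids_s])
  fix v :: "nat list" assume len: "length v + 2 = N"
  have "(\<Sum>l<d. a l * before_t (along_y h) ((l + 3) # v)) =
      (\<Sum>l<d. if v \<noteq> [] \<and> last v = 2 \<and> (\<forall>z\<in>set (butlast v). z = 0) then a l * h (N - 3) l else 0)"
    using len by (intro sum.cong refl) (auto simp: before_t_def along_y_y_first)
  then show "(\<Sum>l<d. a l * before_t (along_y h) ((l + 3) # v)) = 0"
    using assms by (simp add: sum_if_const)
qed

lemma annihilates_monomial:
  assumes no_y: "\<forall>c\<in>set \<nu>. \<not> is_y c" and "set (butlast \<nu>) \<subseteq> {0, 1}" "set (tl \<nu>) \<subseteq> {0, 2}"
  shows "annihilates N (monomial \<nu>)"
proof (rule annihilatesI)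
  show "avoids_forbidden (monomial \<nu>)"
    unfolding avoids_forbidden_def
  proof (intro allI impI)
    fix u p q v assume "monomial \<nu> (u @ [p, q] @ v) \<noteq> 0"
    then have \<nu>: "\<nu> = u @ [p, q] @ v" by (simp add: monomial_def split: if_splits)
    have "p \<in> set (butlast \<nu>)" "q \<in> set (tl \<nu>)" unfolding \<nu> by (auto simp: butlast_append, cases u) auto
    then show "allowed_pair p q" using assms by (auto simp: allowed_pair_def)
  qed
  have y_zero: "(monomial \<nu> w :: 'k) = 0" if "l < d" "l + 3 \<in> set w" for w l
    using no_y that by (auto simp: monomial_def is_y_def)
  show "respects_swaps (monomial \<nu>)"
    unfolding respects_swaps_def
  proof (intro allI impI)
    fix l u v assume "l < d"
    then have "(monomial \<nu> (u @ [l + 3, 0] @ v) :: 'k) = 0" by (rule y_zero) simp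
    moreover have "(\<Sum>k<d. companion l k * monomial \<nu> (u @ [0, k + 3] @ v)) = 0"
    proof (intro sum.neutral ballI)
      fix k assume "k \<in> {..<d}"
      then have "(monomial \<nu> (u @ [0, k + 3] @ v) :: 'k) = 0" by (intro y_zero[of k]) auto
      then show "companion l k * monomial \<nu> (u @ [0, k + 3] @ v) = 0" by simp
    qed
    ultimately show "monomial \<nu> (u @ [l + 3, 0] @ v) = (\<Sum>k<d. companion l k * monomial \<nu> (u @ [0, k + 3] @ v))"
      by simp
  qed
  show "respects_start N (monomial \<nu>)"
    unfolding respects_start_def
  proof (intro allI impI)
    fix u v :: "nat list"
    have "(monomial \<nu> (u @ [1, k + 3] @ v) :: 'k) = 0" if "k < d" for k by (rule y_zero[OF that]) simp
    then show "(\<Sum>l<d. a l * monomial \<nu> (u @ [1, l + 3] @ v)) = 0" by simp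
  qed
qed

lemma annihilates_along_y: "annihilates N (along_y (\<lambda>b i. companion_pow b i l))"
  by (intro annihilatesI along_y_avoids_forbidden along_y_respects_swaps
      respects_start_if_avoids_s along_y_avoids_s) simp

lemma annihilates_before_t_along_y: "annihilates N (before_t (along_y (\<lambda>b i. companion_pow b i 0)))"
  by (intro annihilatesI before_t_along_y_avoids_forbidden before_t_respects_swaps
      along_y_respects_swaps respects_start_if_avoids_s before_t_along_y_avoids_s) simp_all

end

context nondegenerate_recurrence
begin

lemma annihilates_after_s_along_y:
  fixes n k l0 :: nat
  defines "h \<equiv> \<lambda>b i. companion_pow b i k * a (n + 1 + l0) - companion_pow b i l0 * a (n + 1 + k)"
  assumes "k < d" "l0 < d"
  shows "annihilates (n + 3) (after_s (along_y h))"
proof (rule annihilatesI)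
  have step: "h (Suc b) i = (\<Sum>j<d. companion i j * h b j)" for b i
    by (simp add: h_def sum_distrib_right right_diff_distrib sum_subtractf mult.assoc)
  show "avoids_forbidden (after_s (along_y h))"
    by (intro after_s_avoids_forbidden along_y_avoids_forbidden along_y_starts_with_x_or_y)
  show "respects_swaps (after_s (along_y h))"
    by (intro after_s_respects_swaps along_y_respects_swaps step)
  have "(\<Sum>j<d. a j * h (n + 1) j)
      = (\<Sum>j<d. a j * companion_pow (n + 1) j k) * a (n + 1 + l0)
        - (\<Sum>j<d. a j * companion_pow (n + 1) j l0) * a (n + 1 + k)"
    by (simp add: h_def right_diff_distrib sum_subtractf sum_distrib_right mult.assoc)
  also have "\<dots> = a (n + 1 + k) * a (n + 1 + l0) - a (n + 1 + l0) * a (n + 1 + k)"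
    using assms(2,3) by (simp only: initial_window_times_companion_pow)
  also have "\<dots> = 0" by simp
  finally show "respects_start (n + 3) (after_s (along_y h))"
    by (intro after_s_along_y_respects_start) (simp add: numeral_3_eq_3)
qed

lemma annihilates_after_s_before_t_along_y:
  assumes "a n = 0"
  shows "annihilates (n + 3) (after_s (before_t (along_y (\<lambda>b i. companion_pow b i 0))))"
proof (rule annihilatesI)
  show "avoids_forbidden (after_s (before_t (along_y (\<lambda>b i. companion_pow b i 0))))"
    by (intro after_s_avoids_forbidden before_t_along_y_avoids_forbidden
        before_t_along_y_starts_with_x_or_y) simp
  show "respects_swaps (after_s (before_t (along_y (\<lambda>b i. companion_pow b i 0))))"
    by (intro after_s_respects_swaps before_t_respects_swaps along_y_respects_swaps) simp
  show "respects_start (n + 3) (after_s (before_t (along_y (\<lambda>b i. companion_pow b i 0))))"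
    using initial_window_times_companion_pow[of 0 n] order_pos assms
    by (intro after_s_before_t_along_y_respects_start) simp
qed

end

section \<open>Normal words and the Hilbert function\<close>

context nondegenerate_recurrence
begin

text \<open>A basis of the degree \<open>n + 3\<close> component modulo the ideal, given a position \<open>l\<^sub>0\<close> with
  \<open>a (n + 1 + l\<^sub>0) \<noteq> 0\<close>: the word \<open>s x\<^sup>n\<^sup>+\<^sup>1 y\<^sub>l\<^sub>0\<close> is the one eliminated by the start relation.\<close>

definition normal_words :: "nat \<Rightarrow> nat \<Rightarrow> nat list list" where
  "normal_words n l0 =
     [replicate (n + 3) 0, 1 # replicate (n + 2) 0, replicate (n + 2) 0 @ [2], 1 # replicate (n + 1) 0 @ [2]]
     @ map (\<lambda>l. replicate (n + 2) 0 @ [l + 3]) [0..<d]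
     @ map (\<lambda>k. 1 # replicate (n + 1) 0 @ [k + 3]) (filter (\<lambda>k. k \<noteq> l0) [0..<d])
     @ [replicate (n + 1) 0 @ [3, 2]]
     @ (if a n = 0 then [1 # replicate n 0 @ [3, 2]] else [])"

lemma mem_normal_words: "\<mu> \<in> set (normal_words n l0) \<longleftrightarrow>
   \<mu> = replicate (n + 3) 0 \<or> \<mu> = 1 # replicate (n + 2) 0 \<or>
   \<mu> = replicate (n + 2) 0 @ [2] \<or> \<mu> = 1 # replicate (n + 1) 0 @ [2] \<or>
   (\<exists>l<d. \<mu> = replicate (n + 2) 0 @ [l + 3]) \<or>
   (\<exists>k<d. k \<noteq> l0 \<and> \<mu> = 1 # replicate (n + 1) 0 @ [k + 3]) \<or>
   \<mu> = replicate (n + 1) 0 @ [3, 2] \<or> (a n = 0 \<and> \<mu> = 1 # replicate n 0 @ [3, 2])"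
  unfolding normal_words_def using order_pos by auto

lemma card_normal_words:
  assumes "l0 < d"
  shows "card (set (normal_words n l0)) = (if a n = 0 then 2 * d + 5 else 2 * d + 4)"
proof -
  have "distinct (map (\<lambda>w. (hd w, last w, \<exists>z\<in>set w. is_y z)) (normal_words n l0))"
    unfolding normal_words_def using order_pos by (auto simp: is_y_def distinct_map inj_on_def)
  then have "card (set (normal_words n l0)) = length (normal_words n l0)"
    by (simp add: distinct_card distinct_map)
  moreover have "{k. k \<noteq> l0} \<inter> set [0..<d] = {0..<d} - {l0}" by auto
  then have "length (filter (\<lambda>k. k \<noteq> l0) [0..<d]) = d - 1"
    using assms by (simp add: distinct_length_filter)
  ultimately show ?thesis unfolding normal_words_def using order_pos by simp
qed

lemma monomial_y_in_span_normal_words: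
  assumes l0: "l0 < d" "a (n + 1 + l0) \<noteq> 0"
    and pre: "pre \<in> {[], [1]}" and suf: "suf \<in> {[], [2]}" and l: "l < d"
    and len: "length pre + m + 1 + length suf = n + 3"
  shows "monomial (pre @ replicate m 0 @ (l + 3) # suf)
    \<in> lin.span (ideal_gens (n+3) \<union> monomial ` set (normal_words n l0))" (is "_ \<in> ?T")
proof -
  have T: "lin.subspace ?T" "lin.span (ideal_gens (n+3)) \<subseteq> ?T"
    by (rule lin.subspace_span, rule lin.span_mono, blast)
  have normal: "monomial \<mu> \<in> ?T" if "\<mu> \<in> set (normal_words n l0)" for \<mu>
    using that by (intro lin.span_base) auto
  have y_t: "monomial (pre @ replicate m 0 @ [l + 3, 2]) \<in> lin.span (ideal_gens (n+3))"
    if "pre \<in> {[], [1]}" "length pre + m = n + 1" "l < d" "l \<noteq> 0" for pre m l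
  proof -
    have "monomial ((pre @ replicate m 0) @ [l + 3, 2]) \<in> lin.span (ideal_gens (n+3))"
      by (rule y_t_in_ideal) (use that in auto)
    then show ?thesis by simp
  qed
  consider "pre = []" "suf = []" | "pre = []" "suf = [2]" | "pre = [1]" "suf = []" | "pre = [1]" "suf = [2]"
    using pre suf by blast
  then show ?thesis
  proof cases
    case 1
    then show ?thesis using l len by (intro normal) (auto simp: mem_normal_words)
  next
    case 2
    then show ?thesis
      using l len y_t[of "[]" m l] T(2) normal[of "replicate (n + 1) 0 @ [3, 2]"]
      by (cases "l = 0") (auto simp: mem_normal_words)
  next
    case 3
    then have "m = n + 1" using len by simp
    moreover have others: "monomial (1 # replicate (n + 1) 0 @ [k + 3]) \<in> ?T" if "k < d" "k \<noteq> l0" for k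
      using that by (intro normal) (auto simp: mem_normal_words)
    moreover have "monomial (1 # replicate (n + 1) 0 @ [l0 + 3]) \<in> ?T"
      by (rule s_zeros_y_in_subspace[OF T]) (use l0 others in auto)
    ultimately show ?thesis using 3 l by (cases "l = l0") auto
  next
    case 4
    then have "m = n" using len by simp
    moreover have "monomial (1 # replicate n 0 @ [3, 2]) \<in> ?T"
      using normal[of "1 # replicate n 0 @ [3, 2]"] s_zeros_y0_t_in_ideal[of n] T(2)
      by (cases "a n = 0") (auto simp: mem_normal_words)
    ultimately show ?thesis
      using 4 y_t[of "[1]" n l] l T(2) by (cases "l = 0") auto
  qed
qed

lemma monomials_in_span_normal_words:
  assumes "l0 < d" "a (n + 1 + l0) \<noteq> 0"
  shows "monomial ` words (d+3) (n+3) \<subseteq> lin.span (ideal_gens (n+3) \<union> monomial ` set (normal_words n l0))"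
    (is "_ \<subseteq> ?T")
proof
  fix f :: "nat list \<Rightarrow> 'k" assume "f \<in> monomial ` words (d+3) (n+3)"
  then obtain w where w: "w \<in> words (d+3) (n+3)" and f: "f = monomial w" by blast
  have no_y: "monomial (pre @ replicate m 0 @ suf) \<in> ?T"
    if "pre \<in> {[], [1]}" "suf \<in> {[], [2]}" "length pre + m + length suf = n + 3" for pre m suf
    using that by (intro lin.span_base) (auto simp: mem_normal_words)
  have "monomial w \<in> ?T"
  proof (rule monomial_in_subspace_by_reduction[OF w lin.subspace_span])
    show "lin.span (ideal_gens (n+3)) \<subseteq> ?T" by (rule lin.span_mono) blast
  qed (fact no_y, rule monomial_y_in_span_normal_words[OF assms])
  then show "f \<in> ?T" using f by simp
qed

definition separates :: "nat \<Rightarrow> nat \<Rightarrow> nat list \<Rightarrow> (nat list \<Rightarrow> 'k) \<Rightarrow> bool" where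
  "separates n l0 \<nu> \<phi> \<longleftrightarrow>
     annihilates (n + 3) \<phi> \<and> \<phi> \<nu> \<noteq> 0 \<and> (\<forall>\<mu>\<in>set (normal_words n l0). \<mu> \<noteq> \<nu> \<longrightarrow> \<phi> \<mu> = 0)"

lemma separates_word_without_y:
  assumes "\<nu> \<in> set (normal_words n l0)" "\<forall>c\<in>set \<nu>. \<not> is_y c"
  shows "separates n l0 \<nu> (monomial \<nu>)"
proof -
  have "set (butlast \<nu>) \<subseteq> {0, 1}" "set (tl \<nu>) \<subseteq> {0, 2}"
    using assms order_pos by (auto simp: mem_normal_words is_y_def butlast_append dest: in_set_butlastD)
  then show ?thesis
    unfolding separates_def using annihilates_monomial[OF assms(2)] by (simp add: monomial_def)
qed

lemma separates_x_y:
  "l < d \<Longrightarrow> separates n l0 (replicate (n + 2) 0 @ [l + 3]) (along_y (\<lambda>b i. companion_pow b i l))"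
  unfolding separates_def
  by (auto simp: annihilates_along_y mem_normal_words along_y_def y_position_replicate_append
      y_position_zeros is_y_def split: if_splits)

lemma separates_s_x_y:
  assumes "k < d" "k \<noteq> l0" "l0 < d" "a (n + 1 + l0) \<noteq> 0"
  shows "separates n l0 (1 # replicate (n + 1) 0 @ [k + 3])
    (after_s (along_y (\<lambda>b i. companion_pow b i k * a (n + 1 + l0) - companion_pow b i l0 * a (n + 1 + k))))"
  unfolding separates_def using assms annihilates_after_s_along_y[OF assms(1,3)]
  by (auto simp: mem_normal_words after_s_def along_y_def
      y_position_replicate_append y_position_zeros is_y_def numeral_3_eq_3 split: if_splits)

lemma separates_x_y_t:
  "separates n l0 (replicate (n + 1) 0 @ [3, 2]) (before_t (along_y (\<lambda>b i. companion_pow b i 0)))"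
  unfolding separates_def using order_pos
  by (auto simp: annihilates_before_t_along_y mem_normal_words before_t_def along_y_def
      y_position_replicate_append y_position_zeros is_y_def butlast_append split: if_splits)

lemma separates_s_x_y_t:
  "a n = 0 \<Longrightarrow>
   separates n l0 (1 # replicate n 0 @ [3, 2]) (after_s (before_t (along_y (\<lambda>b i. companion_pow b i 0))))"
  unfolding separates_def using order_pos annihilates_after_s_before_t_along_y[of n]
  by (auto simp: mem_normal_words after_s_def before_t_def
      along_y_def y_position_replicate_append y_position_zeros is_y_def butlast_append numeral_3_eq_3
      split: if_splits)

lemma normal_words_separated:
  assumes l0: "l0 < d" "a (n + 1 + l0) \<noteq> 0"
  shows "separated_by_annihilators (words (d+3) (n+3)) (ideal_gens (n+3)) (set (normal_words n l0))"
proof -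
  have "\<exists>\<phi>. separates n l0 \<nu> \<phi>" if \<nu>: "\<nu> \<in> set (normal_words n l0)" for \<nu>
  proof (cases "\<exists>c\<in>set \<nu>. is_y c")
    case False
    then show ?thesis using separates_word_without_y[OF \<nu>] by blast
  next
    case True
    with \<nu> consider l where "l < d" "\<nu> = replicate (n + 2) 0 @ [l + 3]"
      | k where "k < d" "k \<noteq> l0" "\<nu> = 1 # replicate (n + 1) 0 @ [k + 3]"
      | "\<nu> = replicate (n + 1) 0 @ [3, 2]" | "a n = 0" "\<nu> = 1 # replicate n 0 @ [3, 2]"
      by (auto simp: mem_normal_words is_y_def)
    then show ?thesis
      by cases (blast intro: separates_x_y separates_s_x_y[OF _ _ l0] separates_x_y_t separates_s_x_y_t)+
  qed
  then show ?thesis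
    unfolding separated_by_annihilators_def separates_def annihilates_def by blast
qed

lemma hilb_rels: "hilb (d+3) rels (n+3) = (if a n = 0 then 2*d+5 else 2*d+4)"
proof -
  obtain l0 where l0: "l0 < d" "a (n + 1 + l0) \<noteq> 0" using window_nonzero[of "n + 1"] by blast
  have "set (normal_words n l0) \<subseteq> words (d+3) (n+3)"
    using order_pos by (auto simp: mem_normal_words mem_words)
  then have "lin.dim (lin.span (ideal_gens (n+3))) + card (set (normal_words n l0)) = card (words (d+3) (n+3))"
    by (intro dim_span_add_card_separated finite_words ideal_gens_subset_span_monomials
        monomials_in_span_normal_words[OF l0] normal_words_separated[OF l0])
  then show ?thesis unfolding hilb_def ideal_deg_eq_span using card_normal_words[OF l0(1)] by simp
qed

end

theorem corollary5p1:
  fixes a \<gamma> :: "nat \<Rightarrow> 'k::field" and d :: nat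
  assumes "d \<ge> 1"
    and "\<forall>n\<ge>d. a n = (\<Sum>i=1..d. \<gamma> i * a (n - i))"
    and "\<gamma> d \<noteq> 0"
    and "\<exists>i<d. a i \<noteq> 0"
  shows "\<exists>rels :: (nat \<Rightarrow> nat \<Rightarrow> 'k) list.
           length rels = d^2 + 4*d + 5 \<and>
           (\<forall>r\<in>set rels. \<exists>i<d+3. \<exists>j<d+3. r i j \<noteq> 0) \<and>
           (\<forall>n. hilb (d+3) rels (n+3) = (if a n = 0 then 2*d+5 else 2*d+4))"
proof -
  interpret nondegenerate_recurrence a \<gamma> d
    using assms by unfold_locales
  show ?thesis
    by (intro exI[of _ rels] conjI length_rels rels_nonzero allI hilb_rels)
qed

end
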